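(* Suppose $\tau_f\in(\tau_2^i,\tau_c)$. Then for any $\tau_b\in(\tau_{po}(\tau_f),\tau_f)$, $$p'(\tau_b)<\frac{2h(\tau_b)-2h(\tau_f)}{\tau_b^2-\tau_f^2}<p'(\tau_f),$$ and Liu's extended entropy condition $\frac{2h(\tau_f)-2h(\tau_b)}{\tau_f^2-\tau_b^2}<\frac{2h(\tau_f)-2h(\tau)}{\tau_f^2-\tau^2}$ for all $\tau\in(\tau_b,\tau_f)$ holds.
   Context: The pressure is $p(\tau)=\frac{\mathcal S}{(\tau-1)^\gamma}-\frac{1}{\tau^2}$ for $\tau>1$, with constants $1<\gamma<2$, $\mathcal S>0$, assumed such that there exist $1<\tau_1^i<\tau_2^i$ with $p'<0$ on $(1,\infty)$, $p''>0$ on $(1,\tau_1^i)\cup(\tau_2^i,\infty)$, $p''<0$ on $(\tau_1^i,\tau_2^i)$. The function $h$ satisfies $h'(\tau)=\tau p'(\tau)$. $\tau_c$ is the unique $\tau_c\in(\tau_1^i,\infty)$ with $p'(\tau_1^i)=\frac{2h(\tau_c)-2h(\tau_1^i)}{\tau_c^2-(\tau_1^i)^2}$. For $\tau_f\in(\tau_2^i,\tau_c)$, $\tau_{po}(\tau_f)$ is the unique $\tau\in(\tau_1^i,\tau_2^i)$ with $p'(\tau)=\frac{2h(\tau)-2h(\tau_f)}{\tau^2-\tau_f^2}$. *)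

theory Defs
  imports "HOL-Analysis.Analysis"
begin

definition pressure :: "real \<Rightarrow> real \<Rightarrow> real \<Rightarrow> real" where
  "pressure S \<gamma> \<tau> = S / (\<tau> - 1) powr \<gamma> - 1 / \<tau>\<^sup>2"

end

theory Submission imports Defs begin

(*
Let \<sigma>(\<tau>) = (2h(\<tau>) - 2h(\<tau>f)) / (\<tau>\<^sup>2 - \<tau>f\<^sup>2) and N(\<tau>) = p'(\<tau>) (\<tau>\<^sup>2 - \<tau>f\<^sup>2) - (2h(\<tau>) - 2h(\<tau>f)),
so that p' - \<sigma> = N / (\<tau>\<^sup>2 - \<tau>f\<^sup>2). Since h' = \<tau> p', we have N' = p'' (\<tau>\<^sup>2 - \<tau>f\<^sup>2): N vanishes at
\<tau>po and \<tau>f, increases where p is concave and decreases where p is convex, hence N > 0 and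
p' < \<sigma> on (\<tau>po, \<tau>f). As \<sigma>' = 2\<tau> (p' - \<sigma>) / (\<tau>\<^sup>2 - \<tau>f\<^sup>2), the chord slope \<sigma> is increasing there,
which is Liu's condition. Finally, by Cauchy's mean value theorem \<sigma>(\<tau>) = p'(\<xi>) for some \<xi>
between \<tau> and \<tau>f, and p' increases towards \<tau>f, so \<sigma> < p'(\<tau>f).
*)

lemma DERIV_pos_imp_strict_mono_on:
  fixes f f' :: "real \<Rightarrow> real"
  assumes f_deriv: "\<And>t. t \<in> {a..b} \<Longrightarrow> (f has_real_derivative f' t) (at t)"
    and pos: "\<And>t. t \<in> {a<..<b} \<Longrightarrow> f' t > 0"
  shows "strict_mono_on {a..b} f"
proof (rule strict_mono_onI)
  fix s t
  assume s: "s \<in> {a..b}" and t: "t \<in> {a..b}" and "s < t"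
  show "f s < f t"
  proof (rule DERIV_pos_imp_increasing_open [OF \<open>s < t\<close>])
    show "\<exists>D. (f has_real_derivative D) (at r) \<and> D > 0" if "s < r" "r < t" for r
      using that s t by (intro exI [of _ "f' r"] conjI f_deriv pos) auto
    show "continuous_on {s..t} f"
      using f_deriv s t by (intro DERIV_continuous_on [where D = f'])
        (auto intro: has_field_derivative_at_within)
  qed
qed

lemma DERIV_up_down_imp_pos:
  fixes f f' :: "real \<Rightarrow> real"
  assumes f_deriv: "\<And>t. t \<in> {a..b} \<Longrightarrow> (f has_real_derivative f' t) (at t)"
    and up: "\<And>t. t \<in> {a<..<b} \<Longrightarrow> t < m \<Longrightarrow> f' t > 0"
    and down: "\<And>t. t \<in> {a<..<b} \<Longrightarrow> m < t \<Longrightarrow> f' t < 0"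
    and zeros: "f a = 0" "f b = 0"
    and x: "a < x" "x < b"
  shows "f x > 0"
proof (cases "x \<le> m")
  case True
  have "strict_mono_on {a..x} f"
    by (rule DERIV_pos_imp_strict_mono_on [where f' = f']) (use x True in \<open>auto intro: f_deriv up\<close>)
  from strict_mono_onD [OF this, of a x] x zeros show ?thesis
    by simp
next
  case False
  have "strict_mono_on {x..b} (\<lambda>t. - f t)"
  proof (rule DERIV_pos_imp_strict_mono_on [where f' = "\<lambda>t. - f' t"])
    show "((\<lambda>t. - f t) has_real_derivative - f' t) (at t)" if "t \<in> {x..b}" for t
      using that x by (intro DERIV_minus f_deriv) auto
  qed (use x False in \<open>auto intro: down\<close>)
  from strict_mono_onD [OF this, of x b] x zeros show ?thesis
    by simp
qed

(* Chords of the curve \<tau>\<^sup>2 \<mapsto> 2h(\<tau>), whose slope is p' when h' = \<tau> p'. *)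
definition chord_slope :: "(real \<Rightarrow> real) \<Rightarrow> real \<Rightarrow> real \<Rightarrow> real" where
  "chord_slope h x y = (2 * h x - 2 * h y) / (x\<^sup>2 - y\<^sup>2)"

lemma chord_slope_commute: "chord_slope h x y = chord_slope h y x"
  unfolding chord_slope_def by (metis minus_diff_eq minus_divide_divide)

lemma has_real_derivative_chord_slope:
  assumes "x\<^sup>2 \<noteq> y\<^sup>2" "(h has_real_derivative x * q x) (at x)"
  shows "((\<lambda>x. chord_slope h x y) has_real_derivative
      2 * x * (q x - chord_slope h x y) / (x\<^sup>2 - y\<^sup>2)) (at x)"
proof -
  have "x\<^sup>2 - y\<^sup>2 \<noteq> 0"
    using assms(1) by simp
  then show ?thesis
    unfolding chord_slope_def [abs_def]
    by (auto intro!: derivative_eq_intros assms(2) simp: field_simps power2_eq_square)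
qed

lemma chord_slope_strict_mono_on:
  fixes h q :: "real \<Rightarrow> real"
  assumes "0 \<le> a"
    and h_deriv: "\<And>t. t \<in> {a<..<b} \<Longrightarrow> (h has_real_derivative t * q t) (at t)"
    and below: "\<And>t. t \<in> {a<..<b} \<Longrightarrow> q t < chord_slope h t b"
  shows "strict_mono_on {a<..<b} (\<lambda>x. chord_slope h x b)"
proof (rule strict_mono_onI)
  fix x y
  assume "x \<in> {a<..<b}" "y \<in> {a<..<b}" "x < y"
  show "chord_slope h x b < chord_slope h y b"
  proof (rule DERIV_pos_imp_increasing [OF \<open>x < y\<close>])
    fix t
    assume "x \<le> t" "t \<le> y"
    with \<open>x \<in> {a<..<b}\<close> \<open>y \<in> {a<..<b}\<close> have t: "t \<in> {a<..<b}"
      by auto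
    with \<open>0 \<le> a\<close> have "0 < t" "t\<^sup>2 < b\<^sup>2"
      by (auto simp: power_strict_mono)
    moreover have "q t - chord_slope h t b < 0"
      using below [OF t] by simp
    ultimately have "2 * t * (q t - chord_slope h t b) / (t\<^sup>2 - b\<^sup>2) > 0"
      by (intro divide_neg_neg mult_pos_neg) auto
    with t \<open>t\<^sup>2 < b\<^sup>2\<close> show "\<exists>D. ((\<lambda>x. chord_slope h x b) has_real_derivative D) (at t) \<and> D > 0"
      by (metis has_real_derivative_chord_slope h_deriv less_irrefl)
  qed
qed

lemma deriv_less_chord_slope:
  fixes q q' h :: "real \<Rightarrow> real"
  assumes "0 \<le> a"
    and q_deriv: "\<And>t. t \<in> {a..b} \<Longrightarrow> (q has_real_derivative q' t) (at t)"
    and h_deriv: "\<And>t. t \<in> {a..b} \<Longrightarrow> (h has_real_derivative t * q t) (at t)"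
    and concave: "\<And>t. t \<in> {a<..<b} \<Longrightarrow> t < m \<Longrightarrow> q' t < 0"
    and convex: "\<And>t. t \<in> {a<..<b} \<Longrightarrow> m < t \<Longrightarrow> q' t > 0"
    and sonic: "q a = chord_slope h a b"
    and x: "a < x" "x < b"
  shows "q x < chord_slope h x b"
proof -
  define N where "N t = q t * (t\<^sup>2 - b\<^sup>2) - (2 * h t - 2 * h b)" for t
  have sq_less: "t\<^sup>2 < b\<^sup>2" if "a \<le> t" "t < b" for t
    using that \<open>0 \<le> a\<close> by (simp add: power_strict_mono)
  have "N x > 0"
  proof (rule DERIV_up_down_imp_pos [where f = N and f' = "\<lambda>t. q' t * (t\<^sup>2 - b\<^sup>2)" and m = m])
    show "(N has_real_derivative q' t * (t\<^sup>2 - b\<^sup>2)) (at t)" if "t \<in> {a..b}" for t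
      unfolding N_def [abs_def]
      by (rule derivative_eq_intros refl q_deriv h_deriv that | simp add: algebra_simps)+
    show "q' t * (t\<^sup>2 - b\<^sup>2) > 0" if "t \<in> {a<..<b}" "t < m" for t
      using concave [OF that] sq_less [of t] that by (intro mult_neg_neg) auto
    show "q' t * (t\<^sup>2 - b\<^sup>2) < 0" if "t \<in> {a<..<b}" "m < t" for t
      using convex [OF that] sq_less [of t] that by (intro mult_pos_neg) auto
    show "N a = 0"
      using sonic sq_less [of a] x unfolding N_def chord_slope_def by (simp add: field_simps)
  qed (use x N_def in auto)
  moreover have "q x - chord_slope h x b = N x / (x\<^sup>2 - b\<^sup>2)"
    using sq_less [of x] x unfolding N_def chord_slope_def by (simp add: field_simps)
  moreover have "x\<^sup>2 - b\<^sup>2 < 0"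
    using sq_less [of x] x by simp
  ultimately show ?thesis
    by (metis diff_less_0_iff_less divide_pos_neg)
qed

lemma chord_slope_mean_value:
  fixes h q :: "real \<Rightarrow> real"
  assumes "0 < x" "x < y"
    and h_deriv: "\<And>t. t \<in> {x..y} \<Longrightarrow> (h has_real_derivative t * q t) (at t)"
  obtains \<xi> where "x < \<xi>" "\<xi> < y" "chord_slope h x y = q \<xi>"
proof -
  have "\<exists>\<xi>. x < \<xi> \<and> \<xi> < y \<and> (h y - h x) * (2 * \<xi>) = (y\<^sup>2 - x\<^sup>2) * (\<xi> * q \<xi>)"
  proof (rule GMVT')
    show "isCont h t" if "x \<le> t" "t \<le> y" for t
      using h_deriv that by (auto intro: DERIV_isCont)
    show "((\<lambda>t. t\<^sup>2) has_real_derivative 2 * t) (at t)" for t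
      by (auto intro!: derivative_eq_intros)
  qed (use assms in auto)
  then obtain \<xi> where \<xi>: "x < \<xi>" "\<xi> < y" and eq: "(h y - h x) * (2 * \<xi>) = (y\<^sup>2 - x\<^sup>2) * (\<xi> * q \<xi>)"
    by blast
  have "x\<^sup>2 < y\<^sup>2" "\<xi> \<noteq> 0"
    using assms \<xi> by (auto simp: power_strict_mono)
  have "\<xi> * (2 * (h y - h x)) = \<xi> * ((y\<^sup>2 - x\<^sup>2) * q \<xi>)"
    using eq by (simp add: algebra_simps)
  with \<open>\<xi> \<noteq> 0\<close> have "2 * (h y - h x) = (y\<^sup>2 - x\<^sup>2) * q \<xi>"
    by simp
  with \<open>x\<^sup>2 < y\<^sup>2\<close> have "chord_slope h x y = q \<xi>"
    unfolding chord_slope_def by (simp add: field_simps)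
  with \<xi> show thesis
    by (rule that)
qed

lemma chord_slope_less_deriv:
  fixes h q :: "real \<Rightarrow> real"
  assumes "0 < x" "x < y"
    and h_deriv: "\<And>t. t \<in> {x..y} \<Longrightarrow> (h has_real_derivative t * q t) (at t)"
    and q_mono: "strict_mono_on {x..y} q"
  shows "chord_slope h x y < q y"
proof -
  obtain \<xi> where "x < \<xi>" "\<xi> < y" "chord_slope h x y = q \<xi>"
    using chord_slope_mean_value [OF assms(1-3)] by blast
  with q_mono \<open>x < y\<close> show ?thesis
    by (simp add: strict_mono_onD)
qed

lemma chord_slope_bounds:
  fixes q q' h :: "real \<Rightarrow> real"
  assumes "0 \<le> a" "m < b"
    and q_deriv: "\<And>t. t \<in> {a..b} \<Longrightarrow> (q has_real_derivative q' t) (at t)"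
    and h_deriv: "\<And>t. t \<in> {a..b} \<Longrightarrow> (h has_real_derivative t * q t) (at t)"
    and concave: "\<And>t. t \<in> {a<..<b} \<Longrightarrow> t < m \<Longrightarrow> q' t < 0"
    and convex: "\<And>t. t \<in> {a<..<b} \<Longrightarrow> m < t \<Longrightarrow> q' t > 0"
    and sonic: "q a = chord_slope h a b"
    and x: "a < x" "x < b"
  shows "q x < chord_slope h x b"
    and "chord_slope h x b < q b"
    and "\<And>t. x < t \<Longrightarrow> t < b \<Longrightarrow> chord_slope h b x < chord_slope h b t"
proof -
  have below: "q t < chord_slope h t b" if "t \<in> {a<..<b}" for t
    using deriv_less_chord_slope [OF assms(1) q_deriv h_deriv concave convex sonic] that by auto
  then show "q x < chord_slope h x b"
    using x by simp
  have increasing: "strict_mono_on {a<..<b} (\<lambda>t. chord_slope h t b)"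
    using \<open>0 \<le> a\<close> below by (intro chord_slope_strict_mono_on) (auto intro: h_deriv)
  then show "chord_slope h b x < chord_slope h b t" if "x < t" "t < b" for t
    using strict_mono_onD [OF increasing, of x t] x that by (simp add: chord_slope_commute [of h b])
  define c where "c = (max x m + b) / 2"
  have c: "x < c" "m < c" "c < b"
    using x \<open>m < b\<close> unfolding c_def by auto
  have "strict_mono_on {c..b} q"
    by (rule DERIV_pos_imp_strict_mono_on [where f' = q']) (use x c in \<open>auto intro: q_deriv convex\<close>)
  then have "chord_slope h c b < q b"
    by (rule chord_slope_less_deriv [rotated 3]) (use \<open>0 \<le> a\<close> x c in \<open>auto intro: h_deriv\<close>)
  moreover have "chord_slope h x b < chord_slope h c b"
    using strict_mono_onD [OF increasing, of x c] x c by simp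
  ultimately show "chord_slope h x b < q b"
    by simp
qed

lemma has_real_derivative_pressure:
  "1 < t \<Longrightarrow>
    (pressure S \<gamma> has_real_derivative 2 / t ^ 3 - S * \<gamma> * (t - 1) powr (- \<gamma> - 1)) (at t)"
  unfolding pressure_def [abs_def]
  apply (rule derivative_eq_intros refl | simp)+
  apply (auto simp: powr_minus powr_diff powr_add divide_simps)
  apply (simp add: algebra_simps eval_nat_numeral)
  done

lemma has_real_derivative_deriv_pressure:
  assumes "1 < t"
  shows "(deriv (pressure S \<gamma>) has_real_derivative
      - 6 / t ^ 4 + S * \<gamma> * (\<gamma> + 1) * (t - 1) powr (- \<gamma> - 2)) (at t)"
proof (rule has_field_derivative_transform_within_open)
  show "((\<lambda>t. 2 / t ^ 3 - S * \<gamma> * (t - 1) powr (- \<gamma> - 1)) has_real_derivative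
      - 6 / t ^ 4 + S * \<gamma> * (\<gamma> + 1) * (t - 1) powr (- \<gamma> - 2)) (at t)"
    apply (insert assms)
    apply (rule derivative_eq_intros refl | simp)+
    apply (auto simp: powr_minus powr_diff powr_add divide_simps)
    apply (simp add: algebra_simps eval_nat_numeral)
    done
  show "2 / x ^ 3 - S * \<gamma> * (x - 1) powr (- \<gamma> - 1) = deriv (pressure S \<gamma>) x"
    if "x \<in> {1<..}" for x
    using that by (simp add: DERIV_imp_deriv [OF has_real_derivative_pressure])
qed (use assms in auto)

theorem proposition3p4:
  fixes S \<gamma> \<tau>1 \<tau>2 \<tau>c \<tau>po \<tau>f :: real and h :: "real \<Rightarrow> real"
  defines "p \<equiv> pressure S \<gamma>"
  assumes gamma: "1 < \<gamma>" "\<gamma> < 2" and S: "S > 0"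
    and tau12: "1 < \<tau>1" "\<tau>1 < \<tau>2"
    and p1_neg: "\<And>t. 1 < t \<Longrightarrow> deriv p t < 0"
    and p2_pos: "\<And>t. (1 < t \<and> t < \<tau>1) \<or> \<tau>2 < t \<Longrightarrow> deriv (deriv p) t > 0"
    and p2_neg: "\<And>t. \<tau>1 < t \<Longrightarrow> t < \<tau>2 \<Longrightarrow> deriv (deriv p) t < 0"
    and h_deriv: "\<And>t. 1 < t \<Longrightarrow> (h has_real_derivative (t * deriv p t)) (at t)"
    and tauc: "\<tau>1 < \<tau>c"
      "deriv p \<tau>1 = (2 * h \<tau>c - 2 * h \<tau>1) / (\<tau>c\<^sup>2 - \<tau>1\<^sup>2)"
    and tauc_unique: "\<And>t. \<tau>1 < t \<Longrightarrow>
        deriv p \<tau>1 = (2 * h t - 2 * h \<tau>1) / (t\<^sup>2 - \<tau>1\<^sup>2) \<Longrightarrow> t = \<tau>c"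
    and tauf: "\<tau>2 < \<tau>f" "\<tau>f < \<tau>c"
    and taupo: "\<tau>1 < \<tau>po" "\<tau>po < \<tau>2"
      "deriv p \<tau>po = (2 * h \<tau>po - 2 * h \<tau>f) / (\<tau>po\<^sup>2 - \<tau>f\<^sup>2)"
    and taupo_unique: "\<And>t. \<tau>1 < t \<Longrightarrow> t < \<tau>2 \<Longrightarrow>
        deriv p t = (2 * h t - 2 * h \<tau>f) / (t\<^sup>2 - \<tau>f\<^sup>2) \<Longrightarrow> t = \<tau>po"
  shows "\<forall>\<tau>b. \<tau>po < \<tau>b \<and> \<tau>b < \<tau>f \<longrightarrow>
     deriv p \<tau>b < (2 * h \<tau>b - 2 * h \<tau>f) / (\<tau>b\<^sup>2 - \<tau>f\<^sup>2)
     \<and> (2 * h \<tau>b - 2 * h \<tau>f) / (\<tau>b\<^sup>2 - \<tau>f\<^sup>2) < deriv p \<tau>f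
     \<and> (\<forall>\<tau>. \<tau>b < \<tau> \<and> \<tau> < \<tau>f \<longrightarrow>
          (2 * h \<tau>f - 2 * h \<tau>b) / (\<tau>f\<^sup>2 - \<tau>b\<^sup>2) < (2 * h \<tau>f - 2 * h \<tau>) / (\<tau>f\<^sup>2 - \<tau>\<^sup>2))"
  unfolding chord_slope_def [symmetric]
proof (intro allI impI)
  fix \<tau>b
  assume "\<tau>po < \<tau>b \<and> \<tau>b < \<tau>f"
  then have \<tau>b: "\<tau>po < \<tau>b" "\<tau>b < \<tau>f"
    by auto
  have dp_deriv: "(deriv p has_real_derivative deriv (deriv p) t) (at t)" if "t \<in> {\<tau>po..\<tau>f}" for t
  proof -
    have "1 < t"
      using that tau12 taupo by auto
    then show ?thesis
      unfolding p_def using has_real_derivative_deriv_pressure DERIV_imp_deriv by metis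
  qed
  have h': "(h has_real_derivative t * deriv p t) (at t)" if "t \<in> {\<tau>po..\<tau>f}" for t
    using that tau12 taupo by (intro h_deriv) auto
  have concave: "deriv (deriv p) t < 0" if "t \<in> {\<tau>po<..<\<tau>f}" "t < \<tau>2" for t
    using that taupo by (intro p2_neg) auto
  have convex: "deriv (deriv p) t > 0" if "t \<in> {\<tau>po<..<\<tau>f}" "\<tau>2 < t" for t
    using that by (intro p2_pos) auto
  have sonic: "deriv p \<tau>po = chord_slope h \<tau>po \<tau>f"
    using taupo(3) by (simp add: chord_slope_def)
  have "0 \<le> \<tau>po" "\<tau>2 < \<tau>f"
    using tau12 taupo tauf by auto
  note bounds = chord_slope_bounds [OF this dp_deriv h' concave convex sonic \<tau>b]
  show "deriv p \<tau>b < chord_slope h \<tau>b \<tau>f \<and> chord_slope h \<tau>b \<tau>f < deriv p \<tau>f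
      \<and> (\<forall>\<tau>. \<tau>b < \<tau> \<and> \<tau> < \<tau>f \<longrightarrow> chord_slope h \<tau>f \<tau>b < chord_slope h \<tau>f \<tau>)"
    using bounds by blast
qed

end
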